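(* Let $K$ be a field and let $C=[A\xrightarrow{u}B]$, $C'=[A'\xrightarrow{u'}B']$ be complexes of commutative group schemes over $K$. Let $P$ be a biextension of $(B,B')$ by $\mathbb G_m$, and let $\Sigma:(A\times A')\times P\to P$ be an $A\times A'$-linearization of $P$. Suppose that $u(K):A(K)\to B(K)$ and $u'(K):A'(K)\to B'(K)$ are injective. Then $\Sigma$ induces a quotient biextension $Q(K)$ of $(B(K)/A(K),\,B'(K)/A'(K))$ by $K^*$; namely, the set $Q(K)$ of orbits $[x]=\{\Sigma(a,a',x): a\in A(K),a'\in A'(K)\}$ of elements $x\in P(K)$ carries, via the projection, $K^*$-action and partial group laws induced from $P(K)$, the structure of a biextension of $(B(K)/A(K),\,B'(K)/A'(K))$ by $K^*$.
   Context: Here $B(K)/A(K)$ means $B(K)/u(A(K))$ and similarly for $B'(K)/A'(K)$. For a biextension $P$ of $(B,B')$ by $\mathbb G_m$, $+_1$ denotes the group law on the fibers $P_{b,B'}$ over $\{b\}\times B'$ and $+_2$ the group law on the fibers $P_{B,b'}$ over $B\times\{b'\}$. Let $\sigma:A\times B\to B$, $(a,b)\mapsto u(a)+b$, and $\sigma':A'\times B'\to B'$, $(a',b')\mapsto u'(a')+b'$. An $A\times A'$-linearization of $P$ is an action $\Sigma:(A\times A')\times P\to P$ of the group $A\times A'$ on $P$ such that: (i) $\Sigma(a,a',c+x)=c+\Sigma(a,a',x)$ for $c\in\mathbb G_m$; (ii) if $x$ lies above $(b,b')$ then $\Sigma(a,a',x)$ lies above $(\sigma(a,b),\sigma'(a',b'))$;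 (iii) for $a\in A$, $a'_1,a'_2\in A'$ and $x_1,x_2$ above the same $b\in B$, $\Sigma(a,a'_1+a'_2,x_1+_1x_2)=\Sigma(a,a'_1,x_1)+_1\Sigma(a,a'_2,x_2)$, and for $a_1,a_2\in A$, $a'\in A'$ and $x_1,x_2$ above the same $b'\in B'$, $\Sigma(a_1+a_2,a',x_1+_2x_2)=\Sigma(a_1,a',x_1)+_2\Sigma(a_2,a',x_2)$. A biextension of abelian groups $(X,Y)$ by $H$ is a set $Q$ with a surjection onto $X\times Y$, a free $H$-action transitive on fibers, and partial group laws on the fibers over $\{x\}\times Y$ and over $X\times\{y\}$ making them extensions of $Y$ (resp. $X$) by $H$, compatible in the usual sense (Mumford/Grothendieck). *)

theory Defs
  imports "HOL-Algebra.Algebra"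
begin

text \<open>All objects are taken at the level of K-points. Group laws of the
commutative groups (written additively in the paper) are written
multiplicatively, as in HOL-Algebra.\<close>

definition Kstar :: "'k::field monoid" where
  "Kstar = \<lparr>carrier = {c. c \<noteq> 0}, monoid.mult = (*), one = 1\<rparr>"

definition group_ext ::
  "('h, 'm1) monoid_scheme \<Rightarrow> ('g, 'm2) monoid_scheme \<Rightarrow> ('y, 'm3) monoid_scheme
   \<Rightarrow> ('g \<Rightarrow> 'y) \<Rightarrow> ('h \<Rightarrow> 'g \<Rightarrow> 'g) \<Rightarrow> bool" where
  "group_ext H G GY p act \<longleftrightarrow>
     comm_group G \<and> p \<in> hom G GY \<and> p ` carrier G = carrier GY \<and>
     (\<lambda>h. act h \<one>\<^bsub>G\<^esub>) \<in> hom H G \<and>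
     inj_on (\<lambda>h. act h \<one>\<^bsub>G\<^esub>) (carrier H) \<and>
     (\<lambda>h. act h \<one>\<^bsub>G\<^esub>) ` carrier H = kernel G GY p \<and>
     (\<forall>h\<in>carrier H. \<forall>g\<in>carrier G. act h g = act h \<one>\<^bsub>G\<^esub> \<otimes>\<^bsub>G\<^esub> g)"

definition biext ::
  "('x, 'm1) monoid_scheme \<Rightarrow> ('y, 'm2) monoid_scheme \<Rightarrow> ('h, 'm3) monoid_scheme
   \<Rightarrow> 'q set \<Rightarrow> ('q \<Rightarrow> 'x \<times> 'y) \<Rightarrow> ('h \<Rightarrow> 'q \<Rightarrow> 'q)
   \<Rightarrow> ('q \<Rightarrow> 'q \<Rightarrow> 'q) \<Rightarrow> ('q \<Rightarrow> 'q \<Rightarrow> 'q) \<Rightarrow> bool" where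
  "biext GX GY H Q pr act add1 add2 \<longleftrightarrow>
     comm_group GX \<and> comm_group GY \<and> comm_group H \<and>
     pr ` Q = carrier GX \<times> carrier GY \<and>
     (\<forall>h\<in>carrier H. \<forall>q\<in>Q. act h q \<in> Q \<and> pr (act h q) = pr q) \<and>
     (\<forall>q\<in>Q. act \<one>\<^bsub>H\<^esub> q = q) \<and>
     (\<forall>h\<in>carrier H. \<forall>k\<in>carrier H. \<forall>q\<in>Q. act (h \<otimes>\<^bsub>H\<^esub> k) q = act h (act k q)) \<and>
     (\<forall>h\<in>carrier H. \<forall>q\<in>Q. act h q = q \<longrightarrow> h = \<one>\<^bsub>H\<^esub>) \<and>
     (\<forall>q\<in>Q. \<forall>q'\<in>Q. pr q = pr q' \<longrightarrow> (\<exists>h\<in>carrier H. q' = act h q)) \<and>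
     (\<forall>x\<in>carrier GX. \<exists>e.
        group_ext H \<lparr>carrier = {q\<in>Q. fst (pr q) = x}, monoid.mult = add1, one = e\<rparr>
                  GY (\<lambda>q. snd (pr q)) act) \<and>
     (\<forall>y\<in>carrier GY. \<exists>e.
        group_ext H \<lparr>carrier = {q\<in>Q. snd (pr q) = y}, monoid.mult = add2, one = e\<rparr>
                  GX (\<lambda>q. fst (pr q)) act) \<and>
     (\<forall>q11\<in>Q. \<forall>q12\<in>Q. \<forall>q21\<in>Q. \<forall>q22\<in>Q.
        fst (pr q11) = fst (pr q12) \<and> fst (pr q21) = fst (pr q22) \<and>
        snd (pr q11) = snd (pr q21) \<and> snd (pr q12) = snd (pr q22) \<longrightarrow>
        add2 (add1 q11 q12) (add1 q21 q22) = add1 (add2 q11 q21) (add2 q12 q22))"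

definition linearization ::
  "('a, 'm1) monoid_scheme \<Rightarrow> ('c, 'm2) monoid_scheme \<Rightarrow>
   ('b, 'm3) monoid_scheme \<Rightarrow> ('d, 'm4) monoid_scheme \<Rightarrow>
   ('a \<Rightarrow> 'b) \<Rightarrow> ('c \<Rightarrow> 'd) \<Rightarrow> ('h, 'm5) monoid_scheme \<Rightarrow>
   'p set \<Rightarrow> ('p \<Rightarrow> 'b \<times> 'd) \<Rightarrow> ('h \<Rightarrow> 'p \<Rightarrow> 'p) \<Rightarrow>
   ('p \<Rightarrow> 'p \<Rightarrow> 'p) \<Rightarrow> ('p \<Rightarrow> 'p \<Rightarrow> 'p) \<Rightarrow> ('a \<Rightarrow> 'c \<Rightarrow> 'p \<Rightarrow> 'p) \<Rightarrow> bool" where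
  "linearization A A' B B' u u' H P pr act add1 add2 \<Sigma> \<longleftrightarrow>
     \<comment> \<open>\<Sigma> is an action of the group A \<times> A' on P\<close>
     (\<forall>a\<in>carrier A. \<forall>a'\<in>carrier A'. \<forall>x\<in>P. \<Sigma> a a' x \<in> P) \<and>
     (\<forall>x\<in>P. \<Sigma> \<one>\<^bsub>A\<^esub> \<one>\<^bsub>A'\<^esub> x = x) \<and>
     (\<forall>a1\<in>carrier A. \<forall>a2\<in>carrier A. \<forall>a1'\<in>carrier A'. \<forall>a2'\<in>carrier A'. \<forall>x\<in>P.
        \<Sigma> (a1 \<otimes>\<^bsub>A\<^esub> a2) (a1' \<otimes>\<^bsub>A'\<^esub> a2') x = \<Sigma> a1 a1' (\<Sigma> a2 a2' x)) \<and>
     \<comment> \<open>(i)\<close>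
     (\<forall>a\<in>carrier A. \<forall>a'\<in>carrier A'. \<forall>c\<in>carrier H. \<forall>x\<in>P.
        \<Sigma> a a' (act c x) = act c (\<Sigma> a a' x)) \<and>
     \<comment> \<open>(ii)\<close>
     (\<forall>a\<in>carrier A. \<forall>a'\<in>carrier A'. \<forall>x\<in>P.
        pr (\<Sigma> a a' x) = (u a \<otimes>\<^bsub>B\<^esub> fst (pr x), u' a' \<otimes>\<^bsub>B'\<^esub> snd (pr x))) \<and>
     \<comment> \<open>(iii)\<close>
     (\<forall>a\<in>carrier A. \<forall>a1'\<in>carrier A'. \<forall>a2'\<in>carrier A'. \<forall>x1\<in>P. \<forall>x2\<in>P.
        fst (pr x1) = fst (pr x2) \<longrightarrow>
        \<Sigma> a (a1' \<otimes>\<^bsub>A'\<^esub> a2') (add1 x1 x2) = add1 (\<Sigma> a a1' x1) (\<Sigma> a a2' x2)) \<and>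
     (\<forall>a1\<in>carrier A. \<forall>a2\<in>carrier A. \<forall>a'\<in>carrier A'. \<forall>x1\<in>P. \<forall>x2\<in>P.
        snd (pr x1) = snd (pr x2) \<longrightarrow>
        \<Sigma> (a1 \<otimes>\<^bsub>A\<^esub> a2) a' (add2 x1 x2) = add2 (\<Sigma> a1 a' x1) (\<Sigma> a2 a' x2))"

definition lin_orbit ::
  "('a, 'm1) monoid_scheme \<Rightarrow> ('c, 'm2) monoid_scheme \<Rightarrow> ('a \<Rightarrow> 'c \<Rightarrow> 'p \<Rightarrow> 'p) \<Rightarrow> 'p \<Rightarrow> 'p set" where
  "lin_orbit A A' \<Sigma> x = {\<Sigma> a a' x | a a'. a \<in> carrier A \<and> a' \<in> carrier A'}"

end

theory Submission
  imports Defs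
begin

(*
  An element (a, a') of A \<times> A' moves the fibre of P over (b, b') to the fibre over
  (u a b, u' a' b').  As u and u' are injective, an orbit meets every fibre of
  P \<rightarrow> B \<times> B' in at most one point, and the projection, the K*-action and the
  partial laws descend to orbits.  For +_1: if x1, x2 lie over the same b and so do
  y1, y2 with y_i in the orbit of x_i, then y_i = \<Sigma>(a, a_i') x_i with the same a,
  and linearity gives y1 +_1 y2 = \<Sigma>(a, a1' a2') (x1 +_1 x2).  The fibre of the
  quotient over the coset b u(A) is the image of the extension P_b of B' by K*,
  divided by the subgroup \<Sigma>(1, A') e, which maps isomorphically onto u'(A'); so
  it is an extension of B'/A' by K*.  The second partial law follows by exchanging
  the two factors.
*)

lemma comm_group_Kstar: "comm_group (Kstar :: 'k::field monoid)"
proof (rule comm_groupI)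
  fix x :: 'k assume "x \<in> carrier Kstar"
  then show "\<exists>y\<in>carrier Kstar. y \<otimes>\<^bsub>Kstar\<^esub> x = \<one>\<^bsub>Kstar\<^esub>"
    by (intro bexI[of _ "inverse x"]) (auto simp: Kstar_def)
qed (auto simp: Kstar_def)

lemma (in group) rcos_mult_absorb:
  assumes "subgroup H G" "h \<in> H" "x \<in> carrier G"
  shows "H #> (h \<otimes> x) = H #> x"
  using assms by (metis coset_join2 coset_mult_assoc subgroup.mem_carrier subgroup.subset)

lemma (in group) rcos_eqD:
  assumes "subgroup H G" "x \<in> carrier G" "H #> x = H #> y"
  shows "\<exists>h\<in>H. x = h \<otimes> y"
  using rcos_self[OF assms(2,1)] assms(3) unfolding r_coset_def by blast

lemma comm_group_image:
  assumes G: "comm_group G"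
    and onto: "f ` carrier G = S"
    and mult: "\<And>x y. x \<in> carrier G \<Longrightarrow> y \<in> carrier G \<Longrightarrow> m (f x) (f y) = f (x \<otimes>\<^bsub>G\<^esub> y)"
  shows "comm_group \<lparr>carrier = S, monoid.mult = m, one = f \<one>\<^bsub>G\<^esub>\<rparr>"
proof -
  interpret G: comm_group G by (fact G)
  show ?thesis
  proof (rule comm_groupI; simp only: partial_object.simps monoid.simps)
    show "f \<one>\<^bsub>G\<^esub> \<in> S" using onto by blast
  next
    fix x y assume "x \<in> S" "y \<in> S"
    then show "m x y \<in> S" using onto mult by auto
  next
    fix x y z assume "x \<in> S" "y \<in> S" "z \<in> S"
    then show "m (m x y) z = m x (m y z)" using onto by (auto simp: mult G.m_assoc)
  next
    fix x y assume "x \<in> S" "y \<in> S"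
    then show "m x y = m y x" using onto by (auto simp: mult G.m_comm)
  next
    fix x assume "x \<in> S"
    then show "m (f \<one>\<^bsub>G\<^esub>) x = x" using onto by (auto simp: mult)
  next
    fix x assume "x \<in> S"
    then obtain g where "g \<in> carrier G" "x = f g" using onto by blast
    then show "\<exists>y\<in>S. m y x = f \<one>\<^bsub>G\<^esub>"
      using onto by (intro bexI[of _ "f (inv\<^bsub>G\<^esub> g)"]) (auto simp: mult)
  qed
qed

lemma hom_onto_image:
  assumes onto: "f ` carrier G = S"
    and mult: "\<And>x y. x \<in> carrier G \<Longrightarrow> y \<in> carrier G \<Longrightarrow> m (f x) (f y) = f (x \<otimes>\<^bsub>G\<^esub> y)"
  shows "f \<in> hom G \<lparr>carrier = S, monoid.mult = m, one = f \<one>\<^bsub>G\<^esub>\<rparr>"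
  using assms by (auto intro!: homI)

lemma hom_from_image:
  assumes "monoid G" and onto: "f ` carrier G = S"
    and mult: "\<And>x y. x \<in> carrier G \<Longrightarrow> y \<in> carrier G \<Longrightarrow> m (f x) (f y) = f (x \<otimes>\<^bsub>G\<^esub> y)"
    and \<phi>: "\<phi> \<in> hom G Z" and factor: "\<And>x. x \<in> carrier G \<Longrightarrow> g (f x) = \<phi> x"
  shows "g \<in> hom \<lparr>carrier = S, monoid.mult = m, one = f \<one>\<^bsub>G\<^esub>\<rparr> Z"
proof (rule homI; simp only: partial_object.simps monoid.simps)
  fix x assume "x \<in> S"
  with onto factor \<phi> show "g x \<in> carrier Z" by (auto intro: hom_in_carrier)
next
  fix x y assume "x \<in> S" "y \<in> S"
  with onto factor \<phi> \<open>monoid G\<close> show "g (m x y) = g x \<otimes>\<^bsub>Z\<^esub> g y"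
    by (auto simp: mult hom_mult monoid.m_closed)
qed

(* Descending an extension G of Y by H along a surjection f of G and a quotient map \<pi> of Y:
   (inj) and (ker) say that f identifies no two elements of H and collapses everything over
   the kernel of \<pi> into the image of H. *)
lemma group_ext_image:
  assumes ext: "group_ext H G Y p act" and "group H" "group Y" "group Z"
    and quot: "\<pi> \<in> hom Y Z" "\<pi> ` carrier Y = carrier Z"
    and onto: "f ` carrier G = S"
    and mult: "\<And>x y. x \<in> carrier G \<Longrightarrow> y \<in> carrier G \<Longrightarrow> m (f x) (f y) = f (x \<otimes>\<^bsub>G\<^esub> y)"
    and proj: "\<And>x. x \<in> carrier G \<Longrightarrow> pS (f x) = \<pi> (p x)"
    and action: "\<And>h x. h \<in> carrier H \<Longrightarrow> x \<in> carrier G \<Longrightarrow> actS h (f x) = f (act h x)"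
    and inj: "inj_on (\<lambda>h. f (act h \<one>\<^bsub>G\<^esub>)) (carrier H)"
    and ker: "\<And>x. x \<in> carrier G \<Longrightarrow> \<pi> (p x) = \<one>\<^bsub>Z\<^esub> \<Longrightarrow> \<exists>h\<in>carrier H. f x = f (act h \<one>\<^bsub>G\<^esub>)"
  shows "group_ext H \<lparr>carrier = S, monoid.mult = m, one = f \<one>\<^bsub>G\<^esub>\<rparr> Z pS actS"
proof -
  let ?S = "\<lparr>carrier = S, monoid.mult = m, one = f \<one>\<^bsub>G\<^esub>\<rparr>"
  have G: "comm_group G" and p: "p \<in> hom G Y" "p ` carrier G = carrier Y"
    and i: "(\<lambda>h. act h \<one>\<^bsub>G\<^esub>) \<in> hom H G" "(\<lambda>h. act h \<one>\<^bsub>G\<^esub>) ` carrier H = kernel G Y p"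
    and transl: "\<And>h g. h \<in> carrier H \<Longrightarrow> g \<in> carrier G \<Longrightarrow> act h g = act h \<one>\<^bsub>G\<^esub> \<otimes>\<^bsub>G\<^esub> g"
    using ext unfolding group_ext_def by auto
  interpret G: comm_group G by (fact G)
  have act_one_in: "act h \<one>\<^bsub>G\<^esub> \<in> carrier G" if "h \<in> carrier H" for h
    using i(1) that by (rule hom_in_carrier)
  have hom_S: "pS \<in> hom ?S Z"
    using hom_from_image[OF G.is_monoid onto mult hom_compose[OF p(1) quot(1)]] proj by simp
  have "pS ` S = \<pi> ` p ` carrier G"
    using onto proj by (force simp: image_image)
  then have surj_S: "pS ` S = carrier Z" using p quot by simp
  have hom_H: "(\<lambda>h. actS h (f \<one>\<^bsub>G\<^esub>)) \<in> hom H ?S"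
    using group.hom_restrict[OF \<open>group H\<close> hom_compose[OF i(1) hom_onto_image[OF onto mult]]]
    by (simp add: action act_one_in)
  have ker_S: "(\<lambda>h. actS h (f \<one>\<^bsub>G\<^esub>)) ` carrier H = kernel ?S Z pS"
  proof (intro equalityI subsetI)
    fix q assume "q \<in> (\<lambda>h. actS h (f \<one>\<^bsub>G\<^esub>)) ` carrier H"
    then obtain h where h: "h \<in> carrier H" "q = f (act h \<one>\<^bsub>G\<^esub>)" by (auto simp: action)
    then have "p (act h \<one>\<^bsub>G\<^esub>) = \<one>\<^bsub>Y\<^esub>" using i(2) unfolding kernel_def by blast
    then have "pS q = \<one>\<^bsub>Z\<^esub>"
      using h proj act_one_in hom_one[OF quot(1) \<open>group Y\<close> \<open>group Z\<close>] by simp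
    then show "q \<in> kernel ?S Z pS" using h onto act_one_in unfolding kernel_def by auto
  next
    fix q assume "q \<in> kernel ?S Z pS"
    then obtain x where "x \<in> carrier G" "q = f x" "\<pi> (p x) = \<one>\<^bsub>Z\<^esub>"
      using onto proj unfolding kernel_def by auto
    then show "q \<in> (\<lambda>h. actS h (f \<one>\<^bsub>G\<^esub>)) ` carrier H" using ker by (force simp: action)
  qed
  have inj_S: "inj_on (\<lambda>h. actS h (f \<one>\<^bsub>G\<^esub>)) (carrier H)"
    using inj by (rule inj_on_cong[THEN iffD1, rotated]) (simp add: action)
  have transl_S: "actS h q = m (actS h (f \<one>\<^bsub>G\<^esub>)) q" if "h \<in> carrier H" "q \<in> S" for h q
  proof -
    obtain g where g: "g \<in> carrier G" "q = f g" using \<open>q \<in> S\<close> onto by blast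
    then show ?thesis using that transl[of h g] by (simp add: action mult act_one_in)
  qed
  show ?thesis
    using comm_group_image[of G f S m, OF G onto mult] hom_S surj_S hom_H inj_S ker_S transl_S
    unfolding group_ext_def by simp
qed

definition induced_fun :: "('p \<Rightarrow> 'q) \<Rightarrow> 'p set \<Rightarrow> ('p \<Rightarrow> 'z) \<Rightarrow> 'q \<Rightarrow> 'z" where
  "induced_fun cls P f q = f (SOME x. x \<in> P \<and> cls x = q)"

lemma induced_fun_eq:
  assumes "x \<in> P" and "\<And>y. y \<in> P \<Longrightarrow> cls y = cls x \<Longrightarrow> f y = f x"
  shows "induced_fun cls P f (cls x) = f x"
proof -
  let ?y = "SOME y. y \<in> P \<and> cls y = cls x"
  have "\<exists>y. y \<in> P \<and> cls y = cls x" using assms(1) by blast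
  then have "?y \<in> P \<and> cls ?y = cls x" by (rule someI_ex)
  then show ?thesis unfolding induced_fun_def using assms(2)[of ?y] by simp
qed

(* The representatives are chosen jointly, subject to R, since the partial laws of a
   biextension are only defined on pairs lying over a common point. *)
definition induced_op ::
  "('p \<Rightarrow> 'q) \<Rightarrow> 'p set \<Rightarrow> ('p \<Rightarrow> 'p \<Rightarrow> bool) \<Rightarrow> ('p \<Rightarrow> 'p \<Rightarrow> 'z) \<Rightarrow> 'q \<Rightarrow> 'q \<Rightarrow> 'z" where
  "induced_op cls P R f q1 q2 =
     (case SOME (x1, x2). x1 \<in> P \<and> x2 \<in> P \<and> cls x1 = q1 \<and> cls x2 = q2 \<and> R x1 x2 of
        (x1, x2) \<Rightarrow> f x1 x2)"

lemma induced_op_eq: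
  assumes "x1 \<in> P" "x2 \<in> P" "R x1 x2"
    and "\<And>y1 y2. y1 \<in> P \<Longrightarrow> y2 \<in> P \<Longrightarrow> cls y1 = cls x1 \<Longrightarrow> cls y2 = cls x2 \<Longrightarrow> R y1 y2 \<Longrightarrow>
           f y1 y2 = f x1 x2"
  shows "induced_op cls P R f (cls x1) (cls x2) = f x1 x2"
proof -
  define y where "y = (SOME (y1, y2). y1 \<in> P \<and> y2 \<in> P \<and> cls y1 = cls x1 \<and> cls y2 = cls x2 \<and> R y1 y2)"
  have "\<exists>y. case y of (y1, y2) \<Rightarrow> y1 \<in> P \<and> y2 \<in> P \<and> cls y1 = cls x1 \<and> cls y2 = cls x2 \<and> R y1 y2"
    using assms(1-3) by blast
  then have "case y of (y1, y2) \<Rightarrow> y1 \<in> P \<and> y2 \<in> P \<and> cls y1 = cls x1 \<and> cls y2 = cls x2 \<and> R y1 y2"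
    unfolding y_def by (rule someI_ex)
  then show ?thesis
    unfolding induced_op_def y_def[symmetric] using assms(4)[of "fst y" "snd y"] by (simp split: prod.splits)
qed

lemma lin_orbit_swap: "lin_orbit A' A (\<lambda>a' a. \<Sigma> a a') = lin_orbit A A' \<Sigma>"
  unfolding lin_orbit_def by (intro ext) auto

lemma biext_swap:
  assumes "biext GX GY H Q pr act add1 add2"
  shows "biext GY GX H Q (\<lambda>q. prod.swap (pr q)) act add2 add1"
proof -
  note bx = assms[unfolded biext_def]
  have compat: "\<forall>q11\<in>Q. \<forall>q12\<in>Q. \<forall>q21\<in>Q. \<forall>q22\<in>Q.
      fst (pr q11) = fst (pr q12) \<and> fst (pr q21) = fst (pr q22) \<and>
      snd (pr q11) = snd (pr q21) \<and> snd (pr q12) = snd (pr q22) \<longrightarrow>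
      add2 (add1 q11 q12) (add1 q21 q22) = add1 (add2 q11 q21) (add2 q12 q22)"
    using bx by blast
  have "(\<lambda>q. prod.swap (pr q)) ` Q = prod.swap ` pr ` Q" by auto
  then have "(\<lambda>q. prod.swap (pr q)) ` Q = carrier GY \<times> carrier GX"
    using bx by auto
  moreover have "\<forall>q\<in>Q. \<forall>q'\<in>Q. prod.swap (pr q) = prod.swap (pr q') \<longrightarrow> (\<exists>h\<in>carrier H. q' = act h q)"
    using bx by (metis swap_swap)
  moreover have "\<forall>q11\<in>Q. \<forall>q12\<in>Q. \<forall>q21\<in>Q. \<forall>q22\<in>Q.
      snd (pr q11) = snd (pr q12) \<and> snd (pr q21) = snd (pr q22) \<and>
      fst (pr q11) = fst (pr q21) \<and> fst (pr q12) = fst (pr q22) \<longrightarrow>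
      add1 (add2 q11 q12) (add2 q21 q22) = add2 (add1 q11 q21) (add1 q12 q22)"
    using compat by (metis (no_types, lifting))
  ultimately show ?thesis
    using bx unfolding biext_def fst_swap snd_swap by simp
qed

lemma linearization_swap:
  assumes "linearization A A' B B' u u' H P pr act add1 add2 \<Sigma>"
  shows "linearization A' A B' B u' u H P (\<lambda>q. prod.swap (pr q)) act add2 add1 (\<lambda>a' a. \<Sigma> a a')"
  using assms unfolding linearization_def by simp

locale linearized_biext =
  fixes A :: "'a monoid" and B :: "'b monoid" and A' :: "'c monoid" and B' :: "'d monoid"
    and u :: "'a \<Rightarrow> 'b" and u' :: "'c \<Rightarrow> 'd"
    and P :: "'p set" and pr :: "'p \<Rightarrow> 'b \<times> 'd"
    and act :: "'k::field \<Rightarrow> 'p \<Rightarrow> 'p"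
    and add1 add2 :: "'p \<Rightarrow> 'p \<Rightarrow> 'p"
    and \<Sigma> :: "'a \<Rightarrow> 'c \<Rightarrow> 'p \<Rightarrow> 'p"
  assumes comm_group_A: "comm_group A" and comm_group_B: "comm_group B"
    and comm_group_A': "comm_group A'" and comm_group_B': "comm_group B'"
    and hom_u: "u \<in> hom A B" and hom_u': "u' \<in> hom A' B'"
    and biext: "biext B B' (Kstar :: 'k monoid) P pr act add1 add2"
    and linearization: "linearization A A' B B' u u' (Kstar :: 'k monoid) P pr act add1 add2 \<Sigma>"
    and inj_u: "inj_on u (carrier A)" and inj_u': "inj_on u' (carrier A')"
begin

abbreviation orb :: "'p \<Rightarrow> 'p set" where "orb \<equiv> lin_orbit A A' \<Sigma>"
abbreviation uA :: "'b set" where "uA \<equiv> u ` carrier A"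
abbreviation uA' :: "'d set" where "uA' \<equiv> u' ` carrier A'"

abbreviation prQ :: "'p set \<Rightarrow> 'b set \<times> 'd set" where
  "prQ \<equiv> induced_fun orb P (\<lambda>x. (uA #>\<^bsub>B\<^esub> fst (pr x), uA' #>\<^bsub>B'\<^esub> snd (pr x)))"
abbreviation actQ :: "'k \<Rightarrow> 'p set \<Rightarrow> 'p set" where
  "actQ c \<equiv> induced_fun orb P (\<lambda>x. orb (act c x))"
abbreviation add1Q :: "'p set \<Rightarrow> 'p set \<Rightarrow> 'p set" where
  "add1Q \<equiv> induced_op orb P (\<lambda>x y. fst (pr x) = fst (pr y)) (\<lambda>x y. orb (add1 x y))"
abbreviation add2Q :: "'p set \<Rightarrow> 'p set \<Rightarrow> 'p set" where
  "add2Q \<equiv> induced_op orb P (\<lambda>x y. snd (pr x) = snd (pr y)) (\<lambda>x y. orb (add2 x y))"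

sublocale A: comm_group A by (fact comm_group_A)
sublocale B: comm_group B by (fact comm_group_B)
sublocale A': comm_group A' by (fact comm_group_A')
sublocale B': comm_group B' by (fact comm_group_B')

sublocale u: group_hom A B u
  by (simp add: group_hom_def group_hom_axioms_def hom_u A.is_group B.is_group)
sublocale u': group_hom A' B' u'
  by (simp add: group_hom_def group_hom_axioms_def hom_u' A'.is_group B'.is_group)

lemma linearized_biext_swap:
  "linearized_biext A' B' A B u' u P (\<lambda>q. prod.swap (pr q)) act add2 add1 (\<lambda>a' a. \<Sigma> a a')"
  using comm_group_A comm_group_B comm_group_A' comm_group_B' hom_u hom_u' inj_u inj_u'
    biext_swap[OF biext] linearization_swap[OF linearization]
  by (simp add: linearized_biext_def)

lemma Sigma_closed: "a \<in> carrier A \<Longrightarrow> a' \<in> carrier A' \<Longrightarrow> x \<in> P \<Longrightarrow> \<Sigma> a a' x \<in> P"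
  using linearization unfolding linearization_def by (elim conjE) blast

lemma Sigma_one: "x \<in> P \<Longrightarrow> \<Sigma> \<one>\<^bsub>A\<^esub> \<one>\<^bsub>A'\<^esub> x = x"
  using linearization unfolding linearization_def by (elim conjE) blast

lemma Sigma_mult:
  "\<lbrakk>a1 \<in> carrier A; a2 \<in> carrier A; a1' \<in> carrier A'; a2' \<in> carrier A'; x \<in> P\<rbrakk> \<Longrightarrow>
     \<Sigma> (a1 \<otimes>\<^bsub>A\<^esub> a2) (a1' \<otimes>\<^bsub>A'\<^esub> a2') x = \<Sigma> a1 a1' (\<Sigma> a2 a2' x)"
  using linearization unfolding linearization_def by (elim conjE) blast

lemma Sigma_act:
  "\<lbrakk>a \<in> carrier A; a' \<in> carrier A'; c \<in> carrier Kstar; x \<in> P\<rbrakk> \<Longrightarrow> \<Sigma> a a' (act c x) = act c (\<Sigma> a a' x)"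
  using linearization unfolding linearization_def by (elim conjE) blast

lemma pr_Sigma:
  "\<lbrakk>a \<in> carrier A; a' \<in> carrier A'; x \<in> P\<rbrakk> \<Longrightarrow>
     pr (\<Sigma> a a' x) = (u a \<otimes>\<^bsub>B\<^esub> fst (pr x), u' a' \<otimes>\<^bsub>B'\<^esub> snd (pr x))"
  using linearization unfolding linearization_def by (elim conjE) blast

lemma Sigma_add1:
  "\<lbrakk>a \<in> carrier A; a1' \<in> carrier A'; a2' \<in> carrier A'; x1 \<in> P; x2 \<in> P; fst (pr x1) = fst (pr x2)\<rbrakk> \<Longrightarrow>
     \<Sigma> a (a1' \<otimes>\<^bsub>A'\<^esub> a2') (add1 x1 x2) = add1 (\<Sigma> a a1' x1) (\<Sigma> a a2' x2)"
  using linearization unfolding linearization_def by blast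

lemma pr_image: "pr ` P = carrier B \<times> carrier B'"
  using biext unfolding biext_def by blast

lemma pr_in_carrier:
  assumes "x \<in> P" shows "fst (pr x) \<in> carrier B" "snd (pr x) \<in> carrier B'"
proof -
  have "pr x \<in> carrier B \<times> carrier B'" using assms pr_image by blast
  then show "fst (pr x) \<in> carrier B" "snd (pr x) \<in> carrier B'" by (simp_all add: mem_Times_iff)
qed

lemma act_closed: "c \<in> carrier Kstar \<Longrightarrow> x \<in> P \<Longrightarrow> act c x \<in> P"
  using biext unfolding biext_def by blast

lemma pr_act: "c \<in> carrier Kstar \<Longrightarrow> x \<in> P \<Longrightarrow> pr (act c x) = pr x"
  using biext unfolding biext_def by blast

lemma act_one: "x \<in> P \<Longrightarrow> act \<one>\<^bsub>Kstar\<^esub> x = x"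
  using biext unfolding biext_def by blast

lemma act_mult:
  "\<lbrakk>c \<in> carrier Kstar; d \<in> carrier Kstar; x \<in> P\<rbrakk> \<Longrightarrow> act (c \<otimes>\<^bsub>Kstar\<^esub> d) x = act c (act d x)"
  using biext unfolding biext_def by blast

lemma act_free: "\<lbrakk>c \<in> carrier Kstar; x \<in> P; act c x = x\<rbrakk> \<Longrightarrow> c = \<one>\<^bsub>Kstar\<^esub>"
  using biext unfolding biext_def by blast

lemma act_transitive: "\<lbrakk>x \<in> P; y \<in> P; pr x = pr y\<rbrakk> \<Longrightarrow> \<exists>c\<in>carrier Kstar. y = act c x"
  using biext unfolding biext_def by blast

lemma fibre_group_ext:
  "b \<in> carrier B \<Longrightarrow> \<exists>e. group_ext Kstar \<lparr>carrier = {x \<in> P. fst (pr x) = b}, monoid.mult = add1, one = e\<rparr>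
                                 B' (\<lambda>x. snd (pr x)) act"
  using biext unfolding biext_def by blast

lemma add_compat:
  "\<lbrakk>x11 \<in> P; x12 \<in> P; x21 \<in> P; x22 \<in> P; fst (pr x11) = fst (pr x12); fst (pr x21) = fst (pr x22);
    snd (pr x11) = snd (pr x21); snd (pr x12) = snd (pr x22)\<rbrakk> \<Longrightarrow>
     add2 (add1 x11 x12) (add1 x21 x22) = add1 (add2 x11 x21) (add2 x12 x22)"
  using biext unfolding biext_def by blast

lemma fibre_add1:
  assumes "x1 \<in> P" "x2 \<in> P" "fst (pr x1) = fst (pr x2)"
  shows "add1 x1 x2 \<in> P" "fst (pr (add1 x1 x2)) = fst (pr x1)"
    and "snd (pr (add1 x1 x2)) = snd (pr x1) \<otimes>\<^bsub>B'\<^esub> snd (pr x2)"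
proof -
  obtain e where "group_ext Kstar \<lparr>carrier = {x \<in> P. fst (pr x) = fst (pr x1)}, monoid.mult = add1, one = e\<rparr>
                       B' (\<lambda>x. snd (pr x)) act"
    using fibre_group_ext pr_in_carrier assms by blast
  moreover define F where "F = \<lparr>carrier = {x \<in> P. fst (pr x) = fst (pr x1)}, monoid.mult = add1, one = e\<rparr>"
  ultimately have F: "comm_group F" and p: "(\<lambda>x. snd (pr x)) \<in> hom F B'"
    unfolding group_ext_def by auto
  interpret F: comm_group F by (fact F)
  have "x1 \<otimes>\<^bsub>F\<^esub> x2 \<in> carrier F" using assms by (intro F.m_closed) (simp_all add: F_def)
  then show "add1 x1 x2 \<in> P" "fst (pr (add1 x1 x2)) = fst (pr x1)" by (simp_all add: F_def)
  show "snd (pr (add1 x1 x2)) = snd (pr x1) \<otimes>\<^bsub>B'\<^esub> snd (pr x2)"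
    using hom_mult[OF p, of x1 x2] assms by (simp add: F_def)
qed

lemma lin_orbit_Sigma:
  assumes "x \<in> P" "a \<in> carrier A" "a' \<in> carrier A'"
  shows "orb (\<Sigma> a a' x) = orb x"
proof (intro equalityI subsetI)
  fix y assume "y \<in> orb (\<Sigma> a a' x)"
  then obtain b b' where bb: "b \<in> carrier A" "b' \<in> carrier A'" "y = \<Sigma> b b' (\<Sigma> a a' x)"
    unfolding lin_orbit_def by blast
  then have "y = \<Sigma> (b \<otimes>\<^bsub>A\<^esub> a) (b' \<otimes>\<^bsub>A'\<^esub> a') x" using assms by (simp add: Sigma_mult)
  then show "y \<in> orb x" unfolding lin_orbit_def using assms bb by blast
next
  fix y assume "y \<in> orb x"
  then obtain b b' where bb: "b \<in> carrier A" "b' \<in> carrier A'" "y = \<Sigma> b b' x"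
    unfolding lin_orbit_def by blast
  then have "y = \<Sigma> (b \<otimes>\<^bsub>A\<^esub> inv\<^bsub>A\<^esub> a) (b' \<otimes>\<^bsub>A'\<^esub> inv\<^bsub>A'\<^esub> a') (\<Sigma> a a' x)"
    using assms by (simp add: Sigma_mult[symmetric] A.m_assoc A'.m_assoc)
  then show "y \<in> orb (\<Sigma> a a' x)" unfolding lin_orbit_def using assms bb by blast
qed

lemma lin_orbit_eqD:
  assumes "x \<in> P" "y \<in> P" "orb x = orb y"
  shows "\<exists>a\<in>carrier A. \<exists>a'\<in>carrier A'. y = \<Sigma> a a' x"
proof -
  have "y \<in> orb y" unfolding lin_orbit_def using assms(2) Sigma_one by force
  then show ?thesis using assms(3) unfolding lin_orbit_def by blast
qed

lemma rcos_pr_Sigma: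
  assumes "x \<in> P" "a \<in> carrier A" "a' \<in> carrier A'"
  shows "uA #>\<^bsub>B\<^esub> fst (pr (\<Sigma> a a' x)) = uA #>\<^bsub>B\<^esub> fst (pr x)"
    and "uA' #>\<^bsub>B'\<^esub> snd (pr (\<Sigma> a a' x)) = uA' #>\<^bsub>B'\<^esub> snd (pr x)"
  using assms by (simp_all add: pr_Sigma pr_in_carrier B.rcos_mult_absorb B'.rcos_mult_absorb
                                u.img_is_subgroup u'.img_is_subgroup)

lemma Sigma_eq_selfI:
  assumes "x \<in> P" "a \<in> carrier A" "a' \<in> carrier A'" "pr (\<Sigma> a a' x) = pr x"
  shows "\<Sigma> a a' x = x"
proof -
  have "u a \<otimes>\<^bsub>B\<^esub> fst (pr x) = fst (pr x)" "u' a' \<otimes>\<^bsub>B'\<^esub> snd (pr x) = snd (pr x)"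
    using assms(4) pr_Sigma[OF assms(2,3,1)] by (simp_all add: prod_eq_iff)
  then have "u a = \<one>\<^bsub>B\<^esub>" "u' a' = \<one>\<^bsub>B'\<^esub>" using assms(1-3) pr_in_carrier by simp_all
  then have "a = \<one>\<^bsub>A\<^esub>" "a' = \<one>\<^bsub>A'\<^esub>"
    using inj_u inj_u' assms(2,3) by (simp_all add: u.inj_on_one_iff u'.inj_on_one_iff)
  then show ?thesis using Sigma_one assms(1) by simp
qed

lemma lin_orbit_lift:
  assumes y: "y \<in> P" and b: "b \<in> carrier B" "b' \<in> carrier B'"
    and cosets: "uA #>\<^bsub>B\<^esub> b = uA #>\<^bsub>B\<^esub> fst (pr y)" "uA' #>\<^bsub>B'\<^esub> b' = uA' #>\<^bsub>B'\<^esub> snd (pr y)"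
  shows "\<exists>z\<in>P. orb z = orb y \<and> pr z = (b, b')"
proof -
  obtain a where a: "a \<in> carrier A" "b = u a \<otimes>\<^bsub>B\<^esub> fst (pr y)"
    using B.rcos_eqD[OF u.img_is_subgroup b(1) cosets(1)] by blast
  obtain a' where a': "a' \<in> carrier A'" "b' = u' a' \<otimes>\<^bsub>B'\<^esub> snd (pr y)"
    using B'.rcos_eqD[OF u'.img_is_subgroup b(2) cosets(2)] by blast
  show ?thesis
    using y a a' by (intro bexI[of _ "\<Sigma> a a' y"]) (simp_all add: lin_orbit_Sigma pr_Sigma Sigma_closed)
qed

lemma lin_orbit_add1_cong:
  assumes x: "x1 \<in> P" "x2 \<in> P" "fst (pr x1) = fst (pr x2)"
    and y: "y1 \<in> P" "y2 \<in> P" "fst (pr y1) = fst (pr y2)"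
    and orbits: "orb y1 = orb x1" "orb y2 = orb x2"
  shows "orb (add1 y1 y2) = orb (add1 x1 x2)"
proof -
  obtain a1 a1' where a1: "a1 \<in> carrier A" "a1' \<in> carrier A'" "y1 = \<Sigma> a1 a1' x1"
    using lin_orbit_eqD[OF x(1) y(1) orbits(1)[symmetric]] by blast
  obtain a2 a2' where a2: "a2 \<in> carrier A" "a2' \<in> carrier A'" "y2 = \<Sigma> a2 a2' x2"
    using lin_orbit_eqD[OF x(2) y(2) orbits(2)[symmetric]] by blast
  \<comment> \<open>y1 and y2 lie over the same point of B, so injectivity of u forces a1 = a2\<close>
  have "u a1 \<otimes>\<^bsub>B\<^esub> fst (pr x1) = u a2 \<otimes>\<^bsub>B\<^esub> fst (pr x1)"
    using y(3) x a1 a2 by (simp add: pr_Sigma)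
  then have "a1 = a2"
    using inj_u a1 a2 x(1) pr_in_carrier by (simp add: B.r_cancel inj_on_eq_iff)
  then have "add1 y1 y2 = \<Sigma> a1 (a1' \<otimes>\<^bsub>A'\<^esub> a2') (add1 x1 x2)"
    using a1 a2 x by (simp add: Sigma_add1)
  then show ?thesis using a1 a2 x by (simp add: lin_orbit_Sigma fibre_add1)
qed

lemma prQ_orb:
  assumes "x \<in> P"
  shows "prQ (orb x) = (uA #>\<^bsub>B\<^esub> fst (pr x), uA' #>\<^bsub>B'\<^esub> snd (pr x))"
proof (rule induced_fun_eq[OF assms])
  fix y assume "y \<in> P" "orb y = orb x"
  then obtain a a' where "a \<in> carrier A" "a' \<in> carrier A'" "y = \<Sigma> a a' x"
    using lin_orbit_eqD[OF assms] by metis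
  then show "(uA #>\<^bsub>B\<^esub> fst (pr y), uA' #>\<^bsub>B'\<^esub> snd (pr y)) = (uA #>\<^bsub>B\<^esub> fst (pr x), uA' #>\<^bsub>B'\<^esub> snd (pr x))"
    using assms by (simp add: rcos_pr_Sigma)
qed

lemma actQ_orb:
  assumes "c \<in> carrier Kstar" "x \<in> P"
  shows "actQ c (orb x) = orb (act c x)"
proof (rule induced_fun_eq[OF assms(2)])
  fix y assume "y \<in> P" "orb y = orb x"
  then obtain a a' where "a \<in> carrier A" "a' \<in> carrier A'" "y = \<Sigma> a a' x"
    using lin_orbit_eqD[OF assms(2)] by metis
  then show "orb (act c y) = orb (act c x)"
    using assms by (simp add: Sigma_act[symmetric] act_closed lin_orbit_Sigma)
qed

lemma add1Q_orb:
  assumes "x1 \<in> P" "x2 \<in> P" "fst (pr x1) = fst (pr x2)"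
  shows "add1Q (orb x1) (orb x2) = orb (add1 x1 x2)"
proof (rule induced_op_eq)
  fix y1 y2 assume "y1 \<in> P" "y2 \<in> P" "orb y1 = orb x1" "orb y2 = orb x2" "fst (pr y1) = fst (pr y2)"
  then show "orb (add1 y1 y2) = orb (add1 x1 x2)" using lin_orbit_add1_cong[OF assms] by blast
qed (use assms in simp_all)

lemma normal_uA': "uA' \<lhd> B'"
  using B'.subgroup_imp_normal u'.img_is_subgroup .

context
  fixes b e
  assumes fibre_group: "group_ext Kstar \<lparr>carrier = {x \<in> P. fst (pr x) = b}, monoid.mult = add1, one = e\<rparr>
                         B' (\<lambda>x. snd (pr x)) act"
begin

lemma fibre_unit: "e \<in> P"
proof -
  have "comm_group \<lparr>carrier = {x \<in> P. fst (pr x) = b}, monoid.mult = add1, one = e\<rparr>"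
    using fibre_group unfolding group_ext_def by blast
  from comm_group.axioms(1)[OF this] show "e \<in> P"
    using comm_monoid.axioms(1) monoid.one_closed by fastforce
qed

lemma fibre_act_unit_inj: "inj_on (\<lambda>c. orb (act c e)) (carrier Kstar)"
proof (rule inj_onI)
  fix c d assume c: "c \<in> carrier Kstar" and d: "d \<in> carrier Kstar" and cd: "orb (act c e) = orb (act d e)"
  then obtain a a' where a: "a \<in> carrier A" "a' \<in> carrier A'" "act d e = \<Sigma> a a' (act c e)"
    using lin_orbit_eqD act_closed fibre_unit by metis
  have "pr (\<Sigma> a a' (act c e)) = pr (act c e)"
    using a(3)[symmetric] c d fibre_unit by (simp add: pr_act)
  then have "act d e = act c e" using a c fibre_unit by (simp add: Sigma_eq_selfI act_closed)
  moreover have "inj_on (\<lambda>c. act c e) (carrier Kstar)"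
    using fibre_group unfolding group_ext_def by simp
  ultimately show "c = d" using c d by (metis inj_onD)
qed

lemma fibre_kernel_orbit:
  assumes x: "x \<in> P" "fst (pr x) = b" and trivial: "uA' #>\<^bsub>B'\<^esub> snd (pr x) = uA'"
  shows "\<exists>c\<in>carrier Kstar. orb x = orb (act c e)"
proof -
  have "snd (pr x) \<in> uA'"
    using B'.coset_join1[OF trivial pr_in_carrier(2)[OF x(1)] u'.img_is_subgroup] .
  then obtain a' where a': "a' \<in> carrier A'" "snd (pr x) = u' a'" by blast
  \<comment> \<open>moving x along its orbit to the kernel of the fibre extension\<close>
  define z where "z = \<Sigma> \<one>\<^bsub>A\<^esub> (inv\<^bsub>A'\<^esub> a') x"
  have z: "z \<in> P" "orb z = orb x" using x a' by (simp_all add: z_def Sigma_closed lin_orbit_Sigma)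
  have "pr z = (b, \<one>\<^bsub>B'\<^esub>)"
    using x a' pr_in_carrier(1)[OF x(1)] by (simp add: z_def pr_Sigma pr_in_carrier)
  then have "z \<in> kernel \<lparr>carrier = {x \<in> P. fst (pr x) = b}, monoid.mult = add1, one = e\<rparr> B' (\<lambda>x. snd (pr x))"
    using z(1) unfolding kernel_def by simp
  then have "z \<in> (\<lambda>c. act c e) ` carrier Kstar"
    using fibre_group unfolding group_ext_def by simp
  then obtain c where "c \<in> carrier Kstar" "z = act c e" by blast
  then show ?thesis using z(2) by auto
qed

end

lemma quotient_fibre_add1:
  assumes "C \<in> carrier (B Mod uA)"
  shows "\<exists>e. group_ext Kstar \<lparr>carrier = {q \<in> orb ` P. fst (prQ q) = C}, monoid.mult = add1Q, one = e\<rparr>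
                         (B' Mod uA') (\<lambda>q. snd (prQ q)) actQ"
proof -
  obtain b where b: "b \<in> carrier B" "C = uA #>\<^bsub>B\<^esub> b"
    using assms unfolding carrier_FactGroup by blast
  define Pb where "Pb = {x \<in> P. fst (pr x) = b}"
  obtain e where ext: "group_ext Kstar \<lparr>carrier = Pb, monoid.mult = add1, one = e\<rparr> B' (\<lambda>x. snd (pr x)) act"
    using fibre_group_ext b(1) unfolding Pb_def by blast
  have fibre: "{q \<in> orb ` P. fst (prQ q) = C} = orb ` Pb"
  proof (intro equalityI subsetI)
    fix q assume "q \<in> {q \<in> orb ` P. fst (prQ q) = C}"
    then obtain y where y: "y \<in> P" "q = orb y" "uA #>\<^bsub>B\<^esub> b = uA #>\<^bsub>B\<^esub> fst (pr y)"
      using b prQ_orb by auto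
    then obtain z where "z \<in> P" "orb z = orb y" "pr z = (b, snd (pr y))"
      using lin_orbit_lift[OF y(1) b(1) pr_in_carrier(2)[OF y(1)]] by blast
    then have "z \<in> Pb" "q = orb z" using y unfolding Pb_def by simp_all
    then show "q \<in> orb ` Pb" by blast
  qed (use b prQ_orb in \<open>auto simp: Pb_def\<close>)
  have "group_ext Kstar \<lparr>carrier = orb ` Pb, monoid.mult = add1Q, one = orb e\<rparr>
          (B' Mod uA') (\<lambda>q. snd (prQ q)) actQ"
    using group_ext_image[OF ext comm_group.axioms(2)[OF comm_group_Kstar] B'.is_group
        normal.factorgroup_is_group[OF normal_uA'] normal.r_coset_hom_Mod[OF normal_uA'],
        where f = orb and S = "orb ` Pb" and m = add1Q and pS = "\<lambda>q. snd (prQ q)" and actS = actQ]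
    by (simp add: Pb_def carrier_FactGroup add1Q_orb prQ_orb actQ_orb
        fibre_act_unit_inj[OF ext[unfolded Pb_def]] fibre_kernel_orbit[OF ext[unfolded Pb_def]])
  then show ?thesis unfolding fibre by blast
qed

context
begin

interpretation swapped: linearized_biext A' B' A B u' u P "\<lambda>q. prod.swap (pr q)" act add2 add1 "\<lambda>a' a. \<Sigma> a a'"
  by (fact linearized_biext_swap)

(* lin_orbit_swap itself loops as a rewrite rule. *)
lemma swapped_orb: "swapped.orb = orb"
  by (rule lin_orbit_swap)

lemma fibre_add2:
  assumes "x1 \<in> P" "x2 \<in> P" "snd (pr x1) = snd (pr x2)"
  shows "add2 x1 x2 \<in> P" "snd (pr (add2 x1 x2)) = snd (pr x1)"
    and "fst (pr (add2 x1 x2)) = fst (pr x1) \<otimes>\<^bsub>B\<^esub> fst (pr x2)"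
  using swapped.fibre_add1[of x1 x2] assms by simp_all

lemma add2Q_orb:
  assumes "x1 \<in> P" "x2 \<in> P" "snd (pr x1) = snd (pr x2)"
  shows "add2Q (orb x1) (orb x2) = orb (add2 x1 x2)"
  using swapped.add1Q_orb[of x1 x2] assms by (simp add: swapped_orb)

lemma quotient_fibre_add2:
  assumes "C \<in> carrier (B' Mod uA')"
  shows "\<exists>e. group_ext Kstar \<lparr>carrier = {q \<in> orb ` P. snd (prQ q) = C}, monoid.mult = add2Q, one = e\<rparr>
                         (B Mod uA) (\<lambda>q. fst (prQ q)) actQ"
proof -
  have "swapped.prQ = (\<lambda>q. prod.swap (prQ q))"
    by (simp add: induced_fun_def swapped_orb fun_eq_iff)
  then show ?thesis using swapped.quotient_fibre_add1[OF assms] by (simp add: swapped_orb)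
qed

end

lemma prQ_image: "prQ ` orb ` P = carrier (B Mod uA) \<times> carrier (B' Mod uA')"
proof -
  have "prQ ` orb ` P = map_prod (\<lambda>b. uA #>\<^bsub>B\<^esub> b) (\<lambda>b'. uA' #>\<^bsub>B'\<^esub> b') ` pr ` P"
    unfolding image_image by (intro image_cong refl) (simp add: prQ_orb map_prod_def split_def)
  also have "\<dots> = carrier (B Mod uA) \<times> carrier (B' Mod uA')"
    unfolding pr_image carrier_FactGroup by (rule map_prod_surj_on) simp_all
  finally show ?thesis .
qed

lemma actQ_closed: "c \<in> carrier Kstar \<Longrightarrow> q \<in> orb ` P \<Longrightarrow> actQ c q \<in> orb ` P"
  by (auto simp: actQ_orb act_closed)

lemma prQ_actQ: "c \<in> carrier Kstar \<Longrightarrow> q \<in> orb ` P \<Longrightarrow> prQ (actQ c q) = prQ q"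
  by (auto simp: actQ_orb act_closed prQ_orb pr_act)

lemma actQ_one:
  assumes "q \<in> orb ` P" shows "actQ \<one>\<^bsub>Kstar\<^esub> q = q"
proof -
  obtain x where x: "x \<in> P" "q = orb x" using assms by blast
  have "\<one>\<^bsub>Kstar\<^esub> \<in> carrier Kstar" by (simp add: Kstar_def)
  from actQ_orb[OF this x(1)] show ?thesis by (simp add: x act_one)
qed

lemma actQ_mult:
  "\<lbrakk>c \<in> carrier Kstar; d \<in> carrier Kstar; q \<in> orb ` P\<rbrakk> \<Longrightarrow> actQ (c \<otimes>\<^bsub>Kstar\<^esub> d) q = actQ c (actQ d q)"
proof -
  assume cd: "c \<in> carrier Kstar" "d \<in> carrier Kstar" and "q \<in> orb ` P"
  then obtain x where "x \<in> P" "q = orb x" by blast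
  moreover have "c \<otimes>\<^bsub>Kstar\<^esub> d \<in> carrier Kstar" using cd by (simp add: Kstar_def)
  ultimately show ?thesis using cd by (simp add: actQ_orb act_closed act_mult)
qed

lemma actQ_free:
  assumes c: "c \<in> carrier Kstar" and "q \<in> orb ` P" and fixed: "actQ c q = q"
  shows "c = \<one>\<^bsub>Kstar\<^esub>"
proof -
  obtain x where x: "x \<in> P" "q = orb x" using \<open>q \<in> orb ` P\<close> by blast
  then have "orb x = orb (act c x)" using fixed c by (simp add: actQ_orb)
  then obtain a a' where a: "a \<in> carrier A" "a' \<in> carrier A'" "act c x = \<Sigma> a a' x"
    using lin_orbit_eqD x(1) act_closed[OF c x(1)] by blast
  then have "act c x = x" using x(1) c by (metis Sigma_eq_selfI pr_act)
  then show ?thesis using act_free c x(1) by blast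
qed

lemma actQ_transitive:
  assumes "q \<in> orb ` P" "q' \<in> orb ` P" "prQ q = prQ q'"
  shows "\<exists>c\<in>carrier Kstar. q' = actQ c q"
proof -
  obtain x y where x: "x \<in> P" "q = orb x" and y: "y \<in> P" "q' = orb y" using assms(1,2) by blast
  then have "uA #>\<^bsub>B\<^esub> fst (pr x) = uA #>\<^bsub>B\<^esub> fst (pr y)" "uA' #>\<^bsub>B'\<^esub> snd (pr x) = uA' #>\<^bsub>B'\<^esub> snd (pr y)"
    using assms(3) by (simp_all add: prQ_orb)
  then obtain z where z: "z \<in> P" "orb z = orb y" "pr z = pr x"
    using lin_orbit_lift[OF y(1) pr_in_carrier[OF x(1)]] by auto
  then obtain c where "c \<in> carrier Kstar" "z = act c x" using act_transitive x(1) by metis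
  then show ?thesis using x y z by (auto simp: actQ_orb)
qed

lemma quotient_rectangle:
  assumes q: "q11 \<in> orb ` P" "q12 \<in> orb ` P" "q21 \<in> orb ` P" "q22 \<in> orb ` P"
    and "fst (prQ q11) = fst (prQ q12)" "fst (prQ q21) = fst (prQ q22)"
    and "snd (prQ q11) = snd (prQ q21)" "snd (prQ q12) = snd (prQ q22)"
  obtains x11 x12 x21 x22 where "x11 \<in> P" "x12 \<in> P" "x21 \<in> P" "x22 \<in> P"
    and "q11 = orb x11" "q12 = orb x12" "q21 = orb x21" "q22 = orb x22"
    and "fst (pr x11) = fst (pr x12)" "fst (pr x21) = fst (pr x22)"
    and "snd (pr x11) = snd (pr x21)" "snd (pr x12) = snd (pr x22)"
proof -
  obtain y11 y12 y21 y22 where y: "y11 \<in> P" "y12 \<in> P" "y21 \<in> P" "y22 \<in> P"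
    and qy: "q11 = orb y11" "q12 = orb y12" "q21 = orb y21" "q22 = orb y22"
    using q by blast
  have cosets: "uA #>\<^bsub>B\<^esub> fst (pr y11) = uA #>\<^bsub>B\<^esub> fst (pr y12)" "uA #>\<^bsub>B\<^esub> fst (pr y21) = uA #>\<^bsub>B\<^esub> fst (pr y22)"
    "uA' #>\<^bsub>B'\<^esub> snd (pr y11) = uA' #>\<^bsub>B'\<^esub> snd (pr y21)" "uA' #>\<^bsub>B'\<^esub> snd (pr y12) = uA' #>\<^bsub>B'\<^esub> snd (pr y22)"
    using assms(5-8) y qy by (simp_all add: prQ_orb)
  obtain x12 where x12: "x12 \<in> P" "orb x12 = orb y12" "pr x12 = (fst (pr y11), snd (pr y12))"
    using lin_orbit_lift[OF y(2) pr_in_carrier(1)[OF y(1)] pr_in_carrier(2)[OF y(2)] cosets(1)] by blast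
  obtain x21 where x21: "x21 \<in> P" "orb x21 = orb y21" "pr x21 = (fst (pr y21), snd (pr y11))"
    using lin_orbit_lift[OF y(3) pr_in_carrier(1)[OF y(3)] pr_in_carrier(2)[OF y(1)] _ cosets(3)] by blast
  obtain x22 where x22: "x22 \<in> P" "orb x22 = orb y22" "pr x22 = (fst (pr y21), snd (pr y12))"
    using lin_orbit_lift[OF y(4) pr_in_carrier(1)[OF y(3)] pr_in_carrier(2)[OF y(2)] cosets(2) cosets(4)]
    by blast
  show thesis by (rule that[of y11 x12 x21 x22]) (use y qy x12 x21 x22 in simp_all)
qed

lemma quotient_add_compat:
  assumes "q11 \<in> orb ` P" "q12 \<in> orb ` P" "q21 \<in> orb ` P" "q22 \<in> orb ` P"
    and "fst (prQ q11) = fst (prQ q12)" "fst (prQ q21) = fst (prQ q22)"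
    and "snd (prQ q11) = snd (prQ q21)" "snd (prQ q12) = snd (prQ q22)"
  shows "add2Q (add1Q q11 q12) (add1Q q21 q22) = add1Q (add2Q q11 q21) (add2Q q12 q22)"
proof -
  obtain x11 x12 x21 x22 where x: "x11 \<in> P" "x12 \<in> P" "x21 \<in> P" "x22 \<in> P"
    and qx: "q11 = orb x11" "q12 = orb x12" "q21 = orb x21" "q22 = orb x22"
    and rect: "fst (pr x11) = fst (pr x12)" "fst (pr x21) = fst (pr x22)"
      "snd (pr x11) = snd (pr x21)" "snd (pr x12) = snd (pr x22)"
    using quotient_rectangle[OF assms] .
  have "add2Q (add1Q q11 q12) (add1Q q21 q22) = orb (add2 (add1 x11 x12) (add1 x21 x22))"
    using x rect by (simp add: qx add1Q_orb add2Q_orb fibre_add1)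
  also have "\<dots> = orb (add1 (add2 x11 x21) (add2 x12 x22))"
    using x rect by (simp add: add_compat)
  also have "\<dots> = add1Q (add2Q q11 q21) (add2Q q12 q22)"
    using x rect by (simp add: qx add1Q_orb add2Q_orb fibre_add2)
  finally show ?thesis .
qed

lemma biext_quotient: "biext (B Mod uA) (B' Mod uA') Kstar (orb ` P) prQ actQ add1Q add2Q"
  unfolding biext_def
proof (intro conjI)
  show "comm_group (B Mod uA)" by (rule B.abelian_FactGroup[OF u.img_is_subgroup])
  show "comm_group (B' Mod uA')" by (rule B'.abelian_FactGroup[OF u'.img_is_subgroup])
  show "comm_group (Kstar :: 'k monoid)" by (rule comm_group_Kstar)
  show "prQ ` orb ` P = carrier (B Mod uA) \<times> carrier (B' Mod uA')" by (rule prQ_image)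
  show "\<forall>c\<in>carrier Kstar. \<forall>q\<in>orb ` P. actQ c q \<in> orb ` P \<and> prQ (actQ c q) = prQ q"
    by (simp add: actQ_closed prQ_actQ)
  show "\<forall>q\<in>orb ` P. actQ \<one>\<^bsub>Kstar\<^esub> q = q" by (simp add: actQ_one)
  show "\<forall>c\<in>carrier Kstar. \<forall>d\<in>carrier Kstar. \<forall>q\<in>orb ` P. actQ (c \<otimes>\<^bsub>Kstar\<^esub> d) q = actQ c (actQ d q)"
    by (simp add: actQ_mult)
  show "\<forall>c\<in>carrier Kstar. \<forall>q\<in>orb ` P. actQ c q = q \<longrightarrow> c = \<one>\<^bsub>Kstar\<^esub>"
    using actQ_free by blast
  show "\<forall>q\<in>orb ` P. \<forall>q'\<in>orb ` P. prQ q = prQ q' \<longrightarrow> (\<exists>c\<in>carrier Kstar. q' = actQ c q)"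
    using actQ_transitive by blast
  show "\<forall>C\<in>carrier (B Mod uA). \<exists>e. group_ext Kstar
          \<lparr>carrier = {q \<in> orb ` P. fst (prQ q) = C}, monoid.mult = add1Q, one = e\<rparr>
          (B' Mod uA') (\<lambda>q. snd (prQ q)) actQ"
    using quotient_fibre_add1 by blast
  show "\<forall>C\<in>carrier (B' Mod uA'). \<exists>e. group_ext Kstar
          \<lparr>carrier = {q \<in> orb ` P. snd (prQ q) = C}, monoid.mult = add2Q, one = e\<rparr>
          (B Mod uA) (\<lambda>q. fst (prQ q)) actQ"
    using quotient_fibre_add2 by blast
  show "\<forall>q11\<in>orb ` P. \<forall>q12\<in>orb ` P. \<forall>q21\<in>orb ` P. \<forall>q22\<in>orb ` P.
          fst (prQ q11) = fst (prQ q12) \<and> fst (prQ q21) = fst (prQ q22) \<and>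
          snd (prQ q11) = snd (prQ q21) \<and> snd (prQ q12) = snd (prQ q22) \<longrightarrow>
          add2Q (add1Q q11 q12) (add1Q q21 q22) = add1Q (add2Q q11 q21) (add2Q q12 q22)"
    using quotient_add_compat by blast
qed

end

theorem proposition3p4:
  fixes A :: "'a monoid" and B :: "'b monoid" and A' :: "'c monoid" and B' :: "'d monoid"
    and u :: "'a \<Rightarrow> 'b" and u' :: "'c \<Rightarrow> 'd"
    and P :: "'p set" and pr :: "'p \<Rightarrow> 'b \<times> 'd"
    and act :: "'k::field \<Rightarrow> 'p \<Rightarrow> 'p"
    and add1 add2 :: "'p \<Rightarrow> 'p \<Rightarrow> 'p"
    and \<Sigma> :: "'a \<Rightarrow> 'c \<Rightarrow> 'p \<Rightarrow> 'p"
  assumes "comm_group A" and "comm_group B" and "comm_group A'" and "comm_group B'"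
    and "u \<in> hom A B" and "u' \<in> hom A' B'"
    and "biext B B' (Kstar :: 'k monoid) P pr act add1 add2"
    and "linearization A A' B B' u u' (Kstar :: 'k monoid) P pr act add1 add2 \<Sigma>"
    and "inj_on u (carrier A)" and "inj_on u' (carrier A')"
  shows "\<exists>prQ actQ add1Q add2Q.
    biext (B Mod (u ` carrier A)) (B' Mod (u' ` carrier A')) (Kstar :: 'k monoid)
          (lin_orbit A A' \<Sigma> ` P) prQ actQ add1Q add2Q \<and>
    (\<forall>x\<in>P. prQ (lin_orbit A A' \<Sigma> x) =
        ((u ` carrier A) #>\<^bsub>B\<^esub> fst (pr x), (u' ` carrier A') #>\<^bsub>B'\<^esub> snd (pr x))) \<and>
    (\<forall>c\<in>carrier (Kstar :: 'k monoid). \<forall>x\<in>P.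
        actQ c (lin_orbit A A' \<Sigma> x) = lin_orbit A A' \<Sigma> (act c x)) \<and>
    (\<forall>x1\<in>P. \<forall>x2\<in>P. fst (pr x1) = fst (pr x2) \<longrightarrow>
        add1Q (lin_orbit A A' \<Sigma> x1) (lin_orbit A A' \<Sigma> x2) = lin_orbit A A' \<Sigma> (add1 x1 x2)) \<and>
    (\<forall>x1\<in>P. \<forall>x2\<in>P. snd (pr x1) = snd (pr x2) \<longrightarrow>
        add2Q (lin_orbit A A' \<Sigma> x1) (lin_orbit A A' \<Sigma> x2) = lin_orbit A A' \<Sigma> (add2 x1 x2))"
proof -
  interpret linearized_biext A B A' B' u u' P pr act add1 add2 \<Sigma>
    using assms by (rule linearized_biext.intro)
  show ?thesis
    using biext_quotient prQ_orb actQ_orb add1Q_orb add2Q_orb by blast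
qed

end
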